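(* Let $A \in \mathbb{R}^{n \times n}$, let $\lambda \in \mathbb{R}$ be a simple eigenvalue of $A$, and let $x \in \mathbb{R}^n$ be an eigenvector, $Ax = \lambda x$, with $x_i \neq 0$ for all $1 \le i \le n$. Let $\varepsilon \in \{-1,1\}^n$ be defined by $x_i = \varepsilon_i |x_i|$. Let $D$ be the diagonal matrix with $D_{ii} = |x_i|$, let $B = D^{-1} A D$ (so $B_{ij} = a_{ij}|x_j|/|x_i|$), and let $C = B - \lambda \,\mathrm{Id}_{n\times n}$, with rows $c_1,\dots,c_n$; thus $C\varepsilon = 0$. Consider the following randomized iteration (Algorithm 1): start with $0 \neq y_0 \in \mathbb{R}^n$; given $y_k$, choose an index $i \in \{1,\dots,n\}$ at random, independently of the past, with $\mathbb{P}(i=j) = \|c_j\|^2 / \sum_{\ell=1}^n \|c_\ell\|^2$, and set $$y_{k+1} = y_k - \left\langle y_k, \frac{c_i}{\|c_i\|}\right\rangle \frac{c_i}{\|c_i\|}.$$ Let $S = S_k = \{1 \le i \le n : \mathrm{sign}((y_k)_i) \neq \varepsilon_i\}$. Denote by $\sigma_1(C) \ge \dots \ge \sigma_n(C)$ the singular values of $C$ and by $\|C\|_F$ its Frobenius norm. If $\sigma_{n-1}(C) > 0$, then for all $k \in \mathbb{N}$, $$\mathbb{E}\left[\min\{\#S, n - \#S\}\cdot \|y_k\|^2\right] \le n \left(1 - \frac{\sigma_{n-1}(C)^2}{\|C\|_F^2}\right)^k \|y_0\|^2.$$ Moreover, if $y_0$ is chosen uniformly at random from a sphere of radius $\|y_0\|$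 centered at the origin (independently of the index choices), then for all $k \in \mathbb{N}$, $\mathbb{E}\,\|y_k\|^2 \ge \|y_0\|^2/n$.
   Context: $\mathrm{sign}(t)$ denotes the sign of a real number $t$ (with $\mathrm{sign}(0)=0$). Throughout, the solution of $Cy=0$ is assumed unique up to scaling, i.e. the null space of $C$ is spanned by $\varepsilon$; the sign vector $\varepsilon$ is fixed as one of the two admissible choices $\pm\varepsilon$. Rows $c_j$ with $c_j = 0$ are chosen with probability zero. *)

theory Defs
  imports "HOL-Analysis.Analysis" "HOL-Probability.Probability"
    "HOL-Computational_Algebra.Polynomial"
begin

definition charpoly :: "real^'n^'n \<Rightarrow> real poly" where
  "charpoly M = det (\<chi> i j. (if i = j then [:0, 1:] else 0) - [:M $ i $ j:])"

definition simple_eigenvalue :: "real^'n^'n \<Rightarrow> real \<Rightarrow> bool" where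
  "simple_eigenvalue M l \<longleftrightarrow> order l (charpoly M) = 1"

text \<open>Singular values sigma_1 \<ge> ... \<ge> sigma_n: square roots of the eigenvalues
  of C^T C (with multiplicity), sorted decreasingly; indexed 1..n.\<close>
definition singular_value :: "real^'n^'n \<Rightarrow> nat \<Rightarrow> real" where
  "singular_value C k =
     rev (map sqrt (sorted_list_of_multiset (proots (charpoly (transpose C ** C))))) ! (k - 1)"

definition frobenius_norm :: "real^'n^'n \<Rightarrow> real" where
  "frobenius_norm C = sqrt (\<Sum>i\<in>UNIV. \<Sum>j\<in>UNIV. (C $ i $ j)\<^sup>2)"

definition diag_mat :: "real^'n \<Rightarrow> real^'n^'n" where
  "diag_mat d = (\<chi> i j. if i = j then d $ i else 0)"

definition Cmat :: "real^'n^'n \<Rightarrow> real \<Rightarrow> real^'n \<Rightarrow> real^'n^'n" where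
  "Cmat A l x = matrix_inv (diag_mat (\<chi> i. \<bar>x $ i\<bar>)) ** A ** diag_mat (\<chi> i. \<bar>x $ i\<bar>)
                 - l *\<^sub>R mat 1"

definition index_pmf :: "real^'n^'n \<Rightarrow> 'n pmf" where
  "index_pmf C = embed_pmf (\<lambda>j. (norm (C $ j))\<^sup>2 / (\<Sum>l\<in>UNIV. (norm (C $ l))\<^sup>2))"

definition kstep :: "real^'n^'n \<Rightarrow> real^'n \<Rightarrow> 'n \<Rightarrow> real^'n" where
  "kstep C y i = y - (y \<bullet> (C $ i /\<^sub>R norm (C $ i))) *\<^sub>R (C $ i /\<^sub>R norm (C $ i))"

primrec iterate_pmf :: "real^'n^'n \<Rightarrow> real^'n \<Rightarrow> nat \<Rightarrow> (real^'n) pmf" where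
  "iterate_pmf C y0 0 = return_pmf y0"
| "iterate_pmf C y0 (Suc k) = bind_pmf (iterate_pmf C y0 k) (\<lambda>y. map_pmf (kstep C y) (index_pmf C))"

definition wrong_signs :: "real^'n \<Rightarrow> real^'n \<Rightarrow> 'n set" where
  "wrong_signs eps y = {i. sgn (y $ i) \<noteq> eps $ i}"

text \<open>Uniform (normalized surface) probability measure on the sphere of radius r about 0,
  realized as the radial projection of the normalized Lebesgue measure on the unit ball.\<close>
definition uniform_sphere :: "real \<Rightarrow> (real^'n) measure" where
  "uniform_sphere r = distr (uniform_measure lborel (ball 0 1)) borel (\<lambda>z. (r / norm z) *\<^sub>R z)"

end

theory Submission
  imports Defs
begin

(* With e = (sgn x_i)_i one has C e = 0, so the rows of C are orthogonal to e: every
   Kaczmarz step preserves y . e and acts only on the component z of y orthogonal to e.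
   The smallest eigenvalue of C^T C is 0 (eigenvector e), so sigma_(n-1)^2 |z|^2 <= |C z|^2,
   and the classical one-step identity E |y'|^2 = |y|^2 - |C y|^2 / |C|_F^2 makes E |z_k|^2
   decay like (1 - sigma_(n-1)^2 / |C|_F^2)^k.  A Cauchy-Schwarz argument on the entries of
   e_i y_i shows min(#S, n - #S) |y|^2 <= n |z|^2: a vector whose signs both agree and
   disagree with e on many coordinates is far from the line through e.
   Conversely |y_k|^2 >= (y_0 . e)^2 / n, and for y_0 uniform on the sphere of radius r the
   coordinates are uncorrelated by reflection symmetry, so E (y_0 . e)^2 = r^2. *)

section \<open>Spectral facts about symmetric matrices\<close>

lemma symmetric_matrix_inner_commute:
  fixes M :: "real^'n^'n"
  assumes "transpose M = M"
  shows "(M *v u) \<bullet> w = u \<bullet> (M *v w)"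
  by (metis assms dot_lmul_matrix transpose_matrix_vector)

lemma linear_coeff_eq_0_if_quadratic_nonneg:
  fixes a b :: real
  assumes "\<And>t. 0 \<le> 2 * t * a + t\<^sup>2 * b"
  shows "a = 0"
proof (rule ccontr)
  assume "a \<noteq> 0"
  define c where "c = \<bar>b\<bar> + 2"
  have "c > 0" by (simp add: c_def)
  have "2 * (- a / c) * a + (- a / c)\<^sup>2 * b \<le> 2 * (- a / c) * a + (- a / c)\<^sup>2 * \<bar>b\<bar>"
    by (simp add: mult_left_mono)
  also have "\<dots> = a\<^sup>2 * (\<bar>b\<bar> - 2 * c) / c\<^sup>2"
    using \<open>c > 0\<close> by (simp add: field_simps power2_eq_square)
  also have "\<dots> < 0"
    using \<open>a \<noteq> 0\<close> \<open>c > 0\<close> by (intro divide_neg_pos mult_pos_neg) (auto simp: c_def)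
  finally show False using assms[of "- a / c"] by simp
qed

text \<open>A minimiser of the Rayleigh quotient on the unit sphere of an invariant subspace is an
  eigenvector: the first variation of the quadratic form along any direction of the subspace
  vanishes.\<close>
lemma symmetric_matrix_eigenvector_in_invariant_subspace:
  fixes M :: "real^'n^'n"
  assumes sym: "transpose M = M" and W: "subspace W"
    and invariant: "\<And>w. w \<in> W \<Longrightarrow> M *v w \<in> W"
    and "w0 \<in> W" "w0 \<noteq> 0"
  obtains v where "v \<in> W" "norm v = 1" "M *v v = (v \<bullet> (M *v v)) *\<^sub>R v"
proof -
  define S where "S = W \<inter> sphere 0 1"
  have "compact S"
    unfolding S_def using W by (simp add: closed_subspace closed_Int_compact)
  moreover have "w0 /\<^sub>R norm w0 \<in> S"
    using \<open>w0 \<in> W\<close> \<open>w0 \<noteq> 0\<close> W by (auto simp: S_def subspace_scale)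
  moreover have "continuous_on S (\<lambda>u. u \<bullet> (M *v u))"
    by (intro continuous_intros)
  ultimately obtain v where "v \<in> S" and v_min: "\<And>u. u \<in> S \<Longrightarrow> v \<bullet> (M *v v) \<le> u \<bullet> (M *v u)"
    using continuous_attains_inf[of S "\<lambda>u. u \<bullet> (M *v u)"] by blast
  define m where "m = v \<bullet> (M *v v)"
  have "v \<in> W" and "norm v = 1" using \<open>v \<in> S\<close> by (auto simp: S_def)
  have quad_ge: "m * (norm u)\<^sup>2 \<le> u \<bullet> (M *v u)" if "u \<in> W" for u
  proof (cases "u = 0")
    case False
    then have "u /\<^sub>R norm u \<in> S" using that W by (auto simp: S_def subspace_scale)
    then have "m \<le> (u /\<^sub>R norm u) \<bullet> (M *v (u /\<^sub>R norm u))"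
      unfolding m_def by (rule v_min)
    also have "\<dots> = (u \<bullet> (M *v u)) / (norm u)\<^sup>2"
      by (simp add: matrix_vector_mult_scaleR power2_eq_square divide_inverse)
    finally show ?thesis using False by (simp add: field_simps)
  qed simp
  have first_variation: "w \<bullet> (M *v v) - m * (w \<bullet> v) = 0" if "w \<in> W" for w
  proof (rule linear_coeff_eq_0_if_quadratic_nonneg)
    fix t :: real
    have "v + t *\<^sub>R w \<in> W" using \<open>v \<in> W\<close> that W by (simp add: subspace_add subspace_scale)
    from quad_ge[OF this] have "m * (norm (v + t *\<^sub>R w))\<^sup>2 \<le> (v + t *\<^sub>R w) \<bullet> (M *v (v + t *\<^sub>R w))" .
    moreover have "(norm (v + t *\<^sub>R w))\<^sup>2 = 1 + 2 * t * (w \<bullet> v) + t\<^sup>2 * (w \<bullet> w)"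
      using \<open>norm v = 1\<close> unfolding power2_norm_eq_inner
      by (simp add: norm_eq_1 inner_add_left inner_add_right inner_commute power2_eq_square algebra_simps)
    moreover have "v \<bullet> (M *v w) = w \<bullet> (M *v v)"
      using symmetric_matrix_inner_commute[OF sym, of w v] by (simp add: inner_commute)
    then have "(v + t *\<^sub>R w) \<bullet> (M *v (v + t *\<^sub>R w)) = m + 2 * t * (w \<bullet> (M *v v)) + t\<^sup>2 * (w \<bullet> (M *v w))"
      by (simp add: m_def matrix_vector_right_distrib matrix_vector_mult_scaleR inner_add_left
          inner_add_right power2_eq_square algebra_simps)
    ultimately show "0 \<le> 2 * t * (w \<bullet> (M *v v) - m * (w \<bullet> v)) + t\<^sup>2 * (w \<bullet> (M *v w) - m * (w \<bullet> w))"
      by (simp add: algebra_simps)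
  qed
  define d where "d = M *v v - m *\<^sub>R v"
  have "d \<in> W" using \<open>v \<in> W\<close> invariant W by (simp add: d_def subspace_diff subspace_scale)
  from first_variation[OF this] have "d \<bullet> d = 0"
    by (simp add: d_def inner_diff_right inner_diff_left algebra_simps)
  then show ?thesis using that \<open>v \<in> W\<close> \<open>norm v = 1\<close> by (simp add: d_def m_def)
qed

lemma symmetric_matrix_orthonormal_eigenvectors:
  fixes M :: "real^'n^'n"
  assumes sym: "transpose M = M" and "k \<le> CARD('n)"
  obtains B where "finite B" "card B = k" "pairwise orthogonal B"
    "\<And>b. b \<in> B \<Longrightarrow> norm b = 1 \<and> M *v b = (b \<bullet> (M *v b)) *\<^sub>R b"
  using \<open>k \<le> CARD('n)\<close>
proof (induction k arbitrary: thesis)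
  case 0
  then show ?case by (metis card.empty finite.emptyI pairwise_empty empty_iff)
next
  case (Suc k)
  then obtain B where "finite B" "card B = k" "pairwise orthogonal B"
    and eigen: "\<And>b. b \<in> B \<Longrightarrow> norm b = 1 \<and> M *v b = (b \<bullet> (M *v b)) *\<^sub>R b"
    by (metis Suc_leD)
  define W where "W = {w. \<forall>b\<in>B. orthogonal b w}"
  have "subspace W" unfolding W_def by (rule subspace_orthogonal_to_vectors)
  have invariant: "M *v w \<in> W" if "w \<in> W" for w
  proof -
    have "b \<bullet> (M *v w) = (b \<bullet> (M *v b)) * (b \<bullet> w)" if "b \<in> B" for b
      using symmetric_matrix_inner_commute[OF sym, of b w] eigen[OF that] by (metis inner_scaleR_left)
    then show ?thesis using that by (simp add: W_def orthogonal_def)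
  qed
  have "0 \<notin> B" using eigen by force
  then have "independent B" by (rule pairwise_orthogonal_independent[OF \<open>pairwise orthogonal B\<close>])
  then have "dim B < DIM(real^'n)"
    using \<open>card B = k\<close> Suc.prems(2) by (simp add: dim_eq_card_independent)
  then obtain z where "z \<noteq> 0" "\<And>y. y \<in> span B \<Longrightarrow> orthogonal z y"
    using orthogonal_to_subspace_exists by blast
  then have "z \<in> W" by (auto simp: W_def orthogonal_commute span_base)
  then obtain v where "v \<in> W" "norm v = 1" "M *v v = (v \<bullet> (M *v v)) *\<^sub>R v"
    using symmetric_matrix_eigenvector_in_invariant_subspace[OF sym \<open>subspace W\<close> invariant]
      \<open>z \<noteq> 0\<close> by blast
  moreover have "v \<notin> B"
    using \<open>v \<in> W\<close> \<open>norm v = 1\<close> by (auto simp: W_def orthogonal_def)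
  ultimately show ?case
    using Suc.prems(1)[of "insert v B"] \<open>finite B\<close> \<open>card B = k\<close> \<open>pairwise orthogonal B\<close> eigen
    by (auto simp: pairwise_insert W_def orthogonal_commute)
qed

lemma symmetric_matrix_orthonormal_eigenbasis:
  fixes M :: "real^'n^'n"
  assumes sym: "transpose M = M"
  obtains q :: "'n \<Rightarrow> real^'n" and \<mu> :: "'n \<Rightarrow> real"
  where "\<And>i j. q i \<bullet> q j = (if i = j then 1 else 0)" "\<And>i. M *v q i = \<mu> i *\<^sub>R q i"
proof -
  obtain B where "finite B" "card B = CARD('n)" "pairwise orthogonal B"
    and eigen: "\<And>b. b \<in> B \<Longrightarrow> norm b = 1 \<and> M *v b = (b \<bullet> (M *v b)) *\<^sub>R b"
    using symmetric_matrix_orthonormal_eigenvectors[OF sym order_refl] by blast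
  then obtain h where h: "bij_betw h (UNIV::'n set) B"
    using finite_same_card_bij[of "UNIV::'n set" B] by auto
  then have "h i \<in> B" and "h i = h j \<longleftrightarrow> i = j" for i j
    by (auto simp: bij_betw_def inj_eq)
  then show ?thesis
    using that[of h "\<lambda>i. h i \<bullet> (M *v h i)"] eigen \<open>pairwise orthogonal B\<close>
    by (auto simp: norm_eq_1 pairwise_def orthogonal_def)
qed

lemma matrix_vector_mult_mat: "mat t *v (v::real^'n) = t *\<^sub>R v"
  by (simp add: vec_eq_iff matrix_vector_mult_def mat_def if_distrib[of "\<lambda>x. x * _"] sum.delta
      cong: if_cong)

lemma poly_charpoly: "poly (charpoly M) t = det (mat t - M)"
  unfolding charpoly_def
  by (simp add: det_def poly_sum poly_prod mat_def if_distrib[of "\<lambda>p. poly p t"] cong: if_cong)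

lemma inner_orthonormal_expansion:
  fixes q :: "'n \<Rightarrow> real^'n"
  assumes orth: "\<And>i j. q i \<bullet> q j = (if i = j then 1 else 0)"
  shows "x \<bullet> y = (\<Sum>i\<in>UNIV. (x \<bullet> q i) * (y \<bullet> q i))"
proof -
  have "inj q"
  proof (rule injI)
    fix i j assume "q i = q j"
    then show "i = j" using orth[of i j] orth[of j j] by (auto split: if_splits)
  qed
  have pairwise: "pairwise orthogonal (range q)"
    using orth \<open>inj q\<close> by (auto simp: pairwise_def orthogonal_def inj_eq)
  have unit: "\<And>b. b \<in> range q \<Longrightarrow> norm b = 1" using orth by (auto simp: norm_eq_1)
  then have "0 \<notin> range q" by (metis norm_zero zero_neq_one)
  then have "independent (range q)" using pairwise by (intro pairwise_orthogonal_independent) auto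
  moreover have "dim (UNIV :: (real^'n) set) \<le> card (range q)"
    using \<open>inj q\<close> by (simp add: card_image)
  ultimately have "UNIV \<subseteq> span (range q)" using card_ge_dim_independent by blast
  then have "(\<Sum>b\<in>range q. (y \<bullet> b) *\<^sub>R b) = y"
    using orthonormal_basis_expand[OF pairwise unit] by auto
  then have "x \<bullet> y = x \<bullet> (\<Sum>i\<in>UNIV. (y \<bullet> q i) *\<^sub>R q i)"
    using \<open>inj q\<close> by (simp add: sum.reindex)
  then show ?thesis by (simp add: inner_sum_right mult.commute)
qed

lemma charpoly_orthonormal_eigenbasis:
  fixes M :: "real^'n^'n" and q :: "'n \<Rightarrow> real^'n"
  assumes orth: "\<And>i j. q i \<bullet> q j = (if i = j then 1 else 0)"
    and eigen: "\<And>i. M *v q i = \<mu> i *\<^sub>R q i"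
  shows "charpoly M = (\<Prod>i\<in>UNIV. [:- \<mu> i, 1:])"
proof -
  define Q :: "real^'n^'n" where "Q = (\<chi> r c. q c $ r)"
  have column_Q: "column c Q = q c" for c by (simp add: Q_def column_def vec_eq_iff)
  have "orthogonal_matrix Q"
    unfolding orthogonal_matrix_orthonormal_columns column_Q
    using orth by (auto simp: norm_eq_1 orthogonal_def)
  then have det_Q: "det (transpose Q) * det Q = 1"
    using det_orthogonal_matrix[of Q] by (auto simp: det_transpose)
  have entry: "(transpose Q ** X ** Q) $ i $ j = q i \<bullet> (X *v q j)" for X :: "real^'n^'n" and i j
  proof -
    have "(transpose Q ** X ** Q) $ i $ j = (\<Sum>k\<in>UNIV. \<Sum>r\<in>UNIV. q i $ r * X $ r $ k * q j $ k)"
      by (simp add: Q_def matrix_matrix_mult_def transpose_def sum_distrib_right)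
    also have "\<dots> = (\<Sum>r\<in>UNIV. \<Sum>k\<in>UNIV. q i $ r * X $ r $ k * q j $ k)"
      by (rule sum.swap)
    finally show ?thesis
      by (simp add: matrix_vector_mult_def inner_vec_def sum_distrib_left mult.assoc)
  qed
  have "poly (charpoly M) t = poly (\<Prod>i\<in>UNIV. [:- \<mu> i, 1:]) t" for t
  proof -
    have "det (mat t - M) = det (transpose Q ** (mat t - M) ** Q)"
      using det_Q by (simp add: det_mul)
    also have "\<dots> = (\<Prod>i\<in>UNIV. t - \<mu> i)"
      by (subst det_diagonal) (simp_all add: entry matrix_vector_mult_diff_rdistrib eigen
          matrix_vector_mult_mat inner_diff_right orth)
    finally show ?thesis by (simp add: poly_charpoly poly_prod)
  qed
  then show ?thesis using poly_eq_poly_eq_iff by blast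
qed

lemma proots_charpoly_orthonormal_eigenbasis:
  fixes M :: "real^'n^'n" and q :: "'n \<Rightarrow> real^'n"
  assumes "\<And>i j. q i \<bullet> q j = (if i = j then 1 else 0)" and "\<And>i. M *v q i = \<mu> i *\<^sub>R q i"
  shows "proots (charpoly M) = image_mset \<mu> (mset_set UNIV)"
proof -
  have "(\<Sum>i\<in>A. {#\<mu> i#}) = image_mset \<mu> (mset_set A)" for A :: "'n set"
    by (induction A rule: infinite_finite_induct) auto
  then show ?thesis
    unfolding charpoly_orthonormal_eigenbasis[OF assms] by (subst proots_prod) auto
qed

text \<open>Eigenvectors with eigenvalue at least s > 0 are orthogonal to the kernel vector e, so
  e is parallel to the only eigenvector with a smaller eigenvalue, and z has no component
  along it.\<close>
lemma quadratic_form_ge_on_orthogonal_complement_of_kernel: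
  fixes M :: "real^'n^'n" and q :: "'n \<Rightarrow> real^'n"
  assumes sym: "transpose M = M"
    and orth: "\<And>i j. q i \<bullet> q j = (if i = j then 1 else 0)"
    and eigen: "\<And>i. M *v q i = \<mu> i *\<^sub>R q i"
    and "M *v e = 0" "e \<noteq> 0" "s > 0"
    and few_small: "card {i. \<mu> i < s} \<le> 1"
    and "z \<bullet> e = 0"
  shows "s * (norm z)\<^sup>2 \<le> z \<bullet> (M *v z)"
proof -
  note parseval = inner_orthonormal_expansion[OF orth]
  have single: "(\<Sum>j\<in>UNIV. g j) = g i" if "\<And>j. j \<noteq> i \<Longrightarrow> g j = 0" for g :: "'n \<Rightarrow> real" and i
    using sum.mono_neutral_left[of UNIV "{i}" g] that by auto
  have eigen_inner: "x \<bullet> (M *v q i) = \<mu> i * (x \<bullet> q i)" for x i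
    by (simp add: eigen)
  have small_coeff: "z \<bullet> q i = 0" if "\<mu> i < s" for i
  proof -
    have "e \<bullet> q j = 0" if "j \<noteq> i" for j
    proof -
      have "\<not> \<mu> j < s"
      proof
        assume "\<mu> j < s"
        then have "{i, j} \<subseteq> {i. \<mu> i < s}" using \<open>\<mu> i < s\<close> by auto
        then have "card {i, j} \<le> card {i. \<mu> i < s}" by (intro card_mono) auto
        then show False using few_small \<open>j \<noteq> i\<close> by simp
      qed
      moreover have "\<mu> j * (e \<bullet> q j) = 0"
        using symmetric_matrix_inner_commute[OF sym, of e "q j"] \<open>M *v e = 0\<close>
        by (simp add: eigen_inner)
      ultimately show ?thesis using \<open>s > 0\<close> by simp
    qed
    then have "e \<bullet> e = (e \<bullet> q i)\<^sup>2" and "z \<bullet> e = (z \<bullet> q i) * (e \<bullet> q i)"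
      by (simp_all add: parseval[of e e] parseval[of z e] single[where i=i] power2_eq_square)
    then show ?thesis using \<open>e \<noteq> 0\<close> \<open>z \<bullet> e = 0\<close> by (cases "e \<bullet> q i = 0") auto
  qed
  have "s * (norm z)\<^sup>2 = (\<Sum>i\<in>UNIV. s * (z \<bullet> q i)\<^sup>2)"
    unfolding power2_norm_eq_inner parseval[of z z] by (simp add: sum_distrib_left power2_eq_square)
  also have "\<dots> \<le> (\<Sum>i\<in>UNIV. \<mu> i * (z \<bullet> q i)\<^sup>2)"
  proof (rule sum_mono)
    fix i
    show "s * (z \<bullet> q i)\<^sup>2 \<le> \<mu> i * (z \<bullet> q i)\<^sup>2"
      by (cases "\<mu> i < s") (simp_all add: small_coeff mult_right_mono)
  qed
  also have "\<dots> = z \<bullet> (M *v z)"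
    using symmetric_matrix_inner_commute[OF sym, of z]
    by (simp add: parseval[of z "M *v z"] eigen_inner power2_eq_square algebra_simps)
  finally show ?thesis .
qed

lemma sorted_length_filter_less_nth_1:
  fixes L :: "real list"
  assumes "sorted L" "length L \<ge> 2"
  shows "length (filter (\<lambda>x. x < L ! 1) L) \<le> 1"
proof -
  obtain a b rest where L: "L = a # b # rest"
    using assms(2) by (metis Suc_le_length_iff numeral_2_eq_2)
  then have "filter (\<lambda>x. x < b) rest = []"
    using assms(1) by (auto simp: filter_empty_conv)
  then show ?thesis by (simp add: L)
qed

lemma norm_matrix_vector_mult_sq:
  fixes C :: "real^'n^'m"
  shows "(norm (C *v z))\<^sup>2 = z \<bullet> ((transpose C ** C) *v z)"
proof -
  have "(norm (C *v z))\<^sup>2 = ((C *v z) v* C) \<bullet> z"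
    by (simp add: power2_norm_eq_inner dot_lmul_matrix)
  then show ?thesis
    by (simp add: inner_commute matrix_vector_mul_assoc flip: transpose_matrix_vector)
qed

text \<open>sigma_(n-1)^2 is the second smallest eigenvalue of C^T C; as C e = 0, its smallest
  eigenvalue is 0 with eigenvector e.\<close>
lemma singular_value_sq_lower_bound:
  fixes C :: "real^'n^'n"
  assumes n2: "CARD('n) \<ge> 2" and "C *v e = 0" "e \<noteq> 0"
    and pos: "singular_value C (CARD('n) - 1) > 0" and "z \<bullet> e = 0"
  shows "(singular_value C (CARD('n) - 1))\<^sup>2 * (norm z)\<^sup>2 \<le> (norm (C *v z))\<^sup>2"
proof -
  define M where "M = transpose C ** C"
  have sym: "transpose M = M" by (simp add: M_def matrix_transpose_mul)
  obtain q :: "'n \<Rightarrow> real^'n" and \<mu> where orth: "\<And>i j. q i \<bullet> q j = (if i = j then 1 else 0)"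
    and eigen: "\<And>i. M *v q i = \<mu> i *\<^sub>R q i"
    using symmetric_matrix_orthonormal_eigenbasis[OF sym] by blast
  define L where "L = sorted_list_of_multiset (proots (charpoly M))"
  have mset_L: "mset L = image_mset \<mu> (mset_set UNIV)"
    by (simp add: L_def proots_charpoly_orthonormal_eigenbasis[OF orth eigen])
  then have "length L = CARD('n)" by (metis size_image_mset size_mset size_mset_set)
  have "singular_value C (CARD('n) - 1) = rev (map sqrt L) ! (CARD('n) - 2)"
    by (simp add: singular_value_def L_def M_def diff_diff_add numeral_2_eq_2)
  also have "\<dots> = sqrt (L ! 1)"
    using n2 \<open>length L = CARD('n)\<close> by (simp add: rev_nth Suc_diff_Suc numeral_2_eq_2)
  finally have sv: "singular_value C (CARD('n) - 1) = sqrt (L ! 1)" .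
  then have "L ! 1 > 0" using pos by simp
  have "card {i. \<mu> i < L ! 1} = size (filter_mset (\<lambda>x. x < L ! 1) (mset L))"
    by (simp add: mset_L flip: image_mset_filter_mset_swap)
  also have "\<dots> = length (filter (\<lambda>x. x < L ! 1) L)"
    by (simp flip: mset_filter)
  also have "\<dots> \<le> 1"
    using n2 \<open>length L = CARD('n)\<close> by (intro sorted_length_filter_less_nth_1) (auto simp: L_def)
  finally have few_small: "card {i. \<mu> i < L ! 1} \<le> 1" .
  have "M *v e = 0"
    by (simp add: M_def \<open>C *v e = 0\<close> flip: matrix_vector_mul_assoc)
  from quadratic_form_ge_on_orthogonal_complement_of_kernel[OF sym orth eigen this
      \<open>e \<noteq> 0\<close> \<open>L ! 1 > 0\<close> few_small \<open>z \<bullet> e = 0\<close>]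
  have "L ! 1 * (norm z)\<^sup>2 \<le> z \<bullet> (M *v z)" .
  then show ?thesis using sv \<open>L ! 1 > 0\<close> by (simp add: norm_matrix_vector_mult_sq M_def)
qed

section \<open>Randomized Kaczmarz iteration\<close>

lemma norm_vec_sq: "(norm (v :: real^'n))\<^sup>2 = (\<Sum>i\<in>UNIV. (v $ i)\<^sup>2)"
  by (simp add: norm_vec_def L2_set_def sum_nonneg)

lemma frobenius_norm_sq: "(frobenius_norm C)\<^sup>2 = (\<Sum>i\<in>UNIV. (norm (C $ i))\<^sup>2)"
  by (simp add: frobenius_norm_def norm_vec_sq sum_nonneg)

lemma frobenius_norm_nonneg: "frobenius_norm C \<ge> 0"
  by (simp add: frobenius_norm_def sum_nonneg)

lemma norm_matrix_vector_mult_le_frobenius: "norm (C *v z) \<le> frobenius_norm C * norm z"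
proof (rule power2_le_imp_le)
  have "(norm (C *v z))\<^sup>2 = (\<Sum>i\<in>UNIV. (C $ i \<bullet> z)\<^sup>2)"
    by (simp add: norm_vec_sq matrix_vector_mul_component)
  also have "\<dots> \<le> (\<Sum>i\<in>UNIV. (norm (C $ i))\<^sup>2 * (norm z)\<^sup>2)"
    by (intro sum_mono) (metis Cauchy_Schwarz_ineq2 abs_ge_zero power_mono power_mult_distrib power2_abs)
  finally show "(norm (C *v z))\<^sup>2 \<le> (frobenius_norm C * norm z)\<^sup>2"
    by (simp add: power_mult_distrib frobenius_norm_sq sum_distrib_right)
qed (simp add: frobenius_norm_nonneg)

lemma le_frobenius_norm_sq_if_lower_bound:
  fixes C :: "real^'n^'n" and e :: "real^'n"
  assumes "CARD('n) \<ge> 2" and lower: "\<And>z. z \<bullet> e = 0 \<Longrightarrow> s * (norm z)\<^sup>2 \<le> (norm (C *v z))\<^sup>2"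
  shows "s \<le> (frobenius_norm C)\<^sup>2"
proof -
  obtain z :: "real^'n" where "z \<noteq> 0" "orthogonal e z"
    using orthogonal_to_vector_exists[of e] assms(1) by auto
  then have "s * (norm z)\<^sup>2 \<le> (norm (C *v z))\<^sup>2"
    using lower by (simp add: orthogonal_def inner_commute)
  also have "\<dots> \<le> (frobenius_norm C)\<^sup>2 * (norm z)\<^sup>2"
    using norm_matrix_vector_mult_le_frobenius[of C z]
    by (simp flip: power_mult_distrib add: power_mono)
  finally show ?thesis using \<open>z \<noteq> 0\<close> by simp
qed

lemma pmf_index_pmf:
  assumes "frobenius_norm C \<noteq> 0"
  shows "pmf (index_pmf C) j = (norm (C $ j))\<^sup>2 / (frobenius_norm C)\<^sup>2"
proof -
  have "(\<integral>\<^sup>+ i. ennreal ((norm (C $ i))\<^sup>2 / (frobenius_norm C)\<^sup>2) \<partial>count_space UNIV)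
      = ennreal (\<Sum>i\<in>UNIV. (norm (C $ i))\<^sup>2 / (frobenius_norm C)\<^sup>2)"
    by (simp add: nn_integral_count_space_finite sum_ennreal)
  also have "\<dots> = 1"
    using assms by (simp flip: sum_divide_distrib frobenius_norm_sq)
  finally show ?thesis
    unfolding index_pmf_def frobenius_norm_sq[symmetric] by (subst pmf_embed_pmf) auto
qed

lemma kstep_norm_sq: "(norm (kstep C y i))\<^sup>2 = (norm y)\<^sup>2 - (y \<bullet> C $ i)\<^sup>2 / (norm (C $ i))\<^sup>2"
proof (cases "C $ i = 0")
  case False
  define u where "u = C $ i /\<^sub>R norm (C $ i)"
  have "norm u = 1" using False by (simp add: u_def)
  then have "u \<bullet> u = 1" by (simp add: norm_eq_1)
  have "(norm (kstep C y i))\<^sup>2 = (y - (y \<bullet> u) *\<^sub>R u) \<bullet> (y - (y \<bullet> u) *\<^sub>R u)"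
    by (simp add: kstep_def u_def power2_norm_eq_inner)
  also have "\<dots> = y \<bullet> y - (y \<bullet> u)\<^sup>2"
    using \<open>u \<bullet> u = 1\<close> by (simp add: inner_diff_left inner_diff_right inner_commute
        power2_eq_square algebra_simps)
  also have "(y \<bullet> u)\<^sup>2 = (y \<bullet> C $ i)\<^sup>2 / (norm (C $ i))\<^sup>2"
    using False by (simp add: u_def field_simps)
  finally show ?thesis by (simp add: dot_square_norm)
qed (simp add: kstep_def)

lemma expectation_kstep_norm_sq:
  assumes "frobenius_norm C \<noteq> 0"
  shows "measure_pmf.expectation (index_pmf C) (\<lambda>i. (norm (kstep C y i))\<^sup>2)
    = (norm y)\<^sup>2 - (norm (C *v y))\<^sup>2 / (frobenius_norm C)\<^sup>2"
proof -
  have term_eq: "(norm (kstep C y i))\<^sup>2 * pmf (index_pmf C) i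
      = (norm y)\<^sup>2 * ((norm (C $ i))\<^sup>2 / (frobenius_norm C)\<^sup>2) - (C $ i \<bullet> y)\<^sup>2 / (frobenius_norm C)\<^sup>2" for i
    using assms
    by (cases "C $ i = 0") (simp_all add: kstep_norm_sq pmf_index_pmf[OF assms] inner_commute field_simps)
  have "measure_pmf.expectation (index_pmf C) (\<lambda>i. (norm (kstep C y i))\<^sup>2)
      = (\<Sum>i\<in>UNIV. (norm y)\<^sup>2 * ((norm (C $ i))\<^sup>2 / (frobenius_norm C)\<^sup>2)
          - (C $ i \<bullet> y)\<^sup>2 / (frobenius_norm C)\<^sup>2)"
    by (simp add: integral_measure_pmf_real[where A=UNIV] term_eq)
  also have "\<dots> = (norm y)\<^sup>2 * ((\<Sum>i\<in>UNIV. (norm (C $ i))\<^sup>2) / (frobenius_norm C)\<^sup>2)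
      - (\<Sum>i\<in>UNIV. (C $ i \<bullet> y)\<^sup>2) / (frobenius_norm C)\<^sup>2"
    by (simp add: sum_subtractf sum_distrib_left sum_divide_distrib)
  also have "\<dots> = (norm y)\<^sup>2 - (norm (C *v y))\<^sup>2 / (frobenius_norm C)\<^sup>2"
    using assms by (simp add: norm_vec_sq[of "C *v y"] matrix_vector_mul_component
        flip: frobenius_norm_sq)
  finally show ?thesis .
qed

lemma row_inner_eq_0_if_matrix_vector_mult_eq_0:
  fixes C :: "real^'n^'m"
  assumes "C *v e = 0"
  shows "C $ i \<bullet> e = 0"
  using arg_cong[OF assms, of "\<lambda>v. v $ i"] by (simp add: matrix_vector_mul_component)

lemma finite_set_iterate_pmf: "finite (set_pmf (iterate_pmf C y0 k))"
  by (induction k) auto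

lemma expectation_bind_pmf_finite:
  fixes h :: "'b \<Rightarrow> real"
  assumes "finite (set_pmf p)" "\<And>x. x \<in> set_pmf p \<Longrightarrow> finite (set_pmf (f x))"
  shows "measure_pmf.expectation (bind_pmf p f) h
    = measure_pmf.expectation p (\<lambda>x. measure_pmf.expectation (f x) h)"
  using assms by (simp add: pmf_expectation_bind[of "set_pmf p"] integral_measure_pmf_real[of "set_pmf p"]
      mult.commute)

lemma expectation_iterate_pmf_Suc:
  fixes g :: "real^'n \<Rightarrow> real"
  shows "measure_pmf.expectation (iterate_pmf C y0 (Suc k)) g
    = measure_pmf.expectation (iterate_pmf C y0 k)
        (\<lambda>y. measure_pmf.expectation (index_pmf C) (\<lambda>i. g (kstep C y i)))"
  by (simp add: expectation_bind_pmf_finite finite_set_iterate_pmf)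

lemma inner_iterate_pmf:
  assumes "C *v e = 0" and "y \<in> set_pmf (iterate_pmf C y0 k)"
  shows "y \<bullet> e = y0 \<bullet> e"
proof -
  have "kstep C y i \<bullet> e = y \<bullet> e" for y i
    using row_inner_eq_0_if_matrix_vector_mult_eq_0[OF assms(1)] by (simp add: kstep_def inner_diff_left)
  with assms(2) show ?thesis by (induction k arbitrary: y) auto
qed

lemma norm_iterate_pmf_le:
  assumes "y \<in> set_pmf (iterate_pmf C y0 k)"
  shows "norm y \<le> norm y0"
proof -
  have "norm (kstep C y i) \<le> norm y" for y i
  proof (rule power2_le_imp_le)
    show "(norm (kstep C y i))\<^sup>2 \<le> (norm y)\<^sup>2" unfolding kstep_norm_sq by simp
  qed simp
  with assms show ?thesis by (induction k arbitrary: y) (auto intro: order_trans)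
qed

lemma continuous_on_expectation_iterate_pmf:
  fixes g :: "real^'n \<Rightarrow> real"
  assumes "continuous_on UNIV g"
  shows "continuous_on UNIV (\<lambda>z. measure_pmf.expectation (iterate_pmf C z k) g)"
  using assms
proof (induction k arbitrary: g)
  case (Suc k)
  have "measure_pmf.expectation (index_pmf C) (\<lambda>i. g (kstep C y i))
      = (\<Sum>i\<in>UNIV. g (kstep C y i) * pmf (index_pmf C) i)" for y
    by (simp add: integral_measure_pmf_real[where A=UNIV])
  moreover have "continuous_on UNIV (\<lambda>y. \<Sum>i\<in>UNIV. g (kstep C y i) * pmf (index_pmf C) i)"
    unfolding kstep_def by (intro continuous_intros continuous_on_compose2[OF Suc.prems]) auto
  ultimately have "continuous_on UNIV (\<lambda>z. measure_pmf.expectation (iterate_pmf C z k)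
      (\<lambda>y. measure_pmf.expectation (index_pmf C) (\<lambda>i. g (kstep C y i))))"
    using Suc.IH by presburger
  then show ?case by (simp only: expectation_iterate_pmf_Suc)
qed simp

definition project_out :: "real^'n \<Rightarrow> real^'n \<Rightarrow> real^'n" where
  "project_out e y = y - ((y \<bullet> e) / (e \<bullet> e)) *\<^sub>R e"

lemma inner_project_out: "project_out e y \<bullet> e = 0"
  by (cases "e = 0") (simp_all add: project_out_def inner_diff_left)

lemma norm_project_out_sq: "(norm y)\<^sup>2 = (norm (project_out e y))\<^sup>2 + (y \<bullet> e)\<^sup>2 / (e \<bullet> e)"
  unfolding power2_norm_eq_inner project_out_def
  by (cases "e = 0") (simp_all add: inner_diff_left inner_diff_right inner_commute
      power2_eq_square field_simps)

lemma project_out_kstep: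
  assumes "C $ i \<bullet> e = 0"
  shows "project_out e (kstep C y i) = kstep C (project_out e y) i"
  using assms by (simp add: project_out_def kstep_def inner_diff_left inner_diff_right inner_commute
      algebra_simps)

lemma expectation_norm_project_out_iterate_le:
  assumes "C *v e = 0" "frobenius_norm C \<noteq> 0" "s \<le> (frobenius_norm C)\<^sup>2"
    and lower: "\<And>z. z \<bullet> e = 0 \<Longrightarrow> s * (norm z)\<^sup>2 \<le> (norm (C *v z))\<^sup>2"
  shows "measure_pmf.expectation (iterate_pmf C y0 k) (\<lambda>y. (norm (project_out e y))\<^sup>2)
    \<le> (1 - s / (frobenius_norm C)\<^sup>2) ^ k * (norm (project_out e y0))\<^sup>2"
proof (induction k)
  case (Suc k)
  let ?q = "1 - s / (frobenius_norm C)\<^sup>2"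
  have "0 \<le> ?q" using assms(2,3) by simp
  have step: "measure_pmf.expectation (index_pmf C) (\<lambda>i. (norm (project_out e (kstep C y i)))\<^sup>2)
      \<le> ?q * (norm (project_out e y))\<^sup>2" for y
    using lower[OF inner_project_out, of y] assms(2) row_inner_eq_0_if_matrix_vector_mult_eq_0[OF assms(1)]
    by (simp add: project_out_kstep expectation_kstep_norm_sq divide_right_mono algebra_simps)
  have "measure_pmf.expectation (iterate_pmf C y0 (Suc k)) (\<lambda>y. (norm (project_out e y))\<^sup>2)
      \<le> measure_pmf.expectation (iterate_pmf C y0 k) (\<lambda>y. ?q * (norm (project_out e y))\<^sup>2)"
    unfolding expectation_iterate_pmf_Suc
    by (intro integral_mono integrable_measure_pmf_finite finite_set_iterate_pmf step)
  also have "\<dots> \<le> ?q * (?q ^ k * (norm (project_out e y0))\<^sup>2)"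
    using Suc.IH \<open>0 \<le> ?q\<close> by (simp add: mult_left_mono)
  finally show ?case by simp
qed simp

text \<open>The values u_i outside T sum to at least #T a, so Cauchy-Schwarz bounds their sum of
  squares from below.\<close>
lemma card_mult_sq_le_sum_sq_if_sum_eq_0:
  fixes u :: "'a \<Rightarrow> real"
  assumes "finite I" "T \<subseteq> I" "a \<ge> 0" "(\<Sum>i\<in>I. u i) = 0"
    and below: "\<And>i. i \<in> T \<Longrightarrow> u i \<le> - a"
  shows "real (card T) * real (card I) * a\<^sup>2 \<le> (real (card I) - real (card T)) * (\<Sum>i\<in>I. (u i)\<^sup>2)"
proof -
  have "finite T" using assms(1,2) finite_subset by blast
  define t where "t = real (card T)"
  define m where "m = real (card (I - T))"
  have card_I: "real (card I) = m + t"
    using card_Diff_subset[OF \<open>finite T\<close> assms(2)] card_mono[OF assms(1,2)]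
    by (simp add: m_def t_def of_nat_diff)
  have split: "(\<Sum>i\<in>I. f i) = (\<Sum>i\<in>T. f i) + (\<Sum>i\<in>I - T. f i)" for f :: "'a \<Rightarrow> real"
    using sum.subset_diff[OF assms(2,1)] by (simp add: add.commute)
  have "(\<Sum>i\<in>T. a\<^sup>2) \<le> (\<Sum>i\<in>T. (u i)\<^sup>2)"
  proof (rule sum_mono)
    fix i assume "i \<in> T"
    then have "a\<^sup>2 \<le> (- u i)\<^sup>2" using below \<open>a \<ge> 0\<close> by (intro power_mono) force+
    then show "a\<^sup>2 \<le> (u i)\<^sup>2" by simp
  qed
  then have on_T: "t * a\<^sup>2 \<le> (\<Sum>i\<in>T. (u i)\<^sup>2)" by (simp add: t_def)
  have "(\<Sum>i\<in>T. u i) \<le> (\<Sum>i\<in>T. - a)" using below by (intro sum_mono) auto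
  then have "t * a \<le> (\<Sum>i\<in>I - T. u i)" using split[of u] assms(4) by (simp add: t_def)
  then have "(t * a)\<^sup>2 \<le> (\<Sum>i\<in>I - T. u i * 1)\<^sup>2"
    using \<open>a \<ge> 0\<close> by (intro power_mono) (auto simp: t_def)
  also have "\<dots> \<le> (\<Sum>i\<in>I - T. (u i)\<^sup>2) * (\<Sum>i\<in>I - T. 1\<^sup>2)"
    by (rule Cauchy_Schwarz_ineq_sum)
  finally have off_T: "t\<^sup>2 * a\<^sup>2 \<le> m * (\<Sum>i\<in>I - T. (u i)\<^sup>2)"
    by (simp add: m_def power_mult_distrib mult.commute)
  have "m * (t * a\<^sup>2) \<le> m * (\<Sum>i\<in>T. (u i)\<^sup>2)" using on_T by (simp add: m_def mult_left_mono)
  then have "t * (m + t) * a\<^sup>2 \<le> m * (\<Sum>i\<in>I. (u i)\<^sup>2)"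
    using off_T split[of "\<lambda>i. (u i)\<^sup>2"] by (simp add: algebra_simps power2_eq_square)
  then show ?thesis using card_I by (simp add: t_def)
qed

text \<open>With alpha = (y . e) / n, the values u_i = e_i y_i - alpha have mean zero and sum of
  squares |project_out e y|^2, and |y|^2 = |project_out e y|^2 + n alpha^2. According to the
  sign of alpha, the wrong signs (u_i <= -alpha) or the right signs (-u_i < alpha) play the
  role of T in the previous lemma.\<close>
lemma inner_self_eq_card_if_abs_components_eq_1:
  fixes e :: "real^'n"
  assumes "\<And>i. \<bar>e $ i\<bar> = 1"
  shows "e \<bullet> e = real CARD('n)"
proof -
  have "e $ i * e $ i = 1" for i using abs_mult_self_eq[of "e $ i"] assms[of i] by simp
  then show ?thesis by (simp add: inner_vec_def)
qed

lemma min_card_wrong_signs_le: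
  fixes e y :: "real^'n"
  assumes unit: "\<And>i. \<bar>e $ i\<bar> = 1"
  shows "real (min (card (wrong_signs e y)) (CARD('n) - card (wrong_signs e y))) * (norm y)\<^sup>2
    \<le> real CARD('n) * (norm (project_out e y))\<^sup>2"
proof -
  define n where "n = real CARD('n)"
  define S where "S = wrong_signs e y"
  define s where "s = real (card S)"
  define \<alpha> where "\<alpha> = (y \<bullet> e) / n"
  define z where "z = project_out e y"
  define u where "u i = e $ i * z $ i" for i
  have e_sq: "e $ i * e $ i = 1" for i using abs_mult_self_eq[of "e $ i"] unit[of i] by simp
  have "e \<bullet> e = n" unfolding n_def by (rule inner_self_eq_card_if_abs_components_eq_1[OF unit])
  have "n > 0" by (simp add: n_def)
  have "card S \<le> CARD('n)" by (rule card_mono) auto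
  then have "real (CARD('n) - card S) = n - s" by (simp add: n_def s_def of_nat_diff)
  have norm_y: "(norm y)\<^sup>2 = (norm z)\<^sup>2 + n * \<alpha>\<^sup>2"
    using norm_project_out_sq[of y e] \<open>e \<bullet> e = n\<close> \<open>n > 0\<close>
    by (simp add: z_def \<alpha>_def power2_eq_square)
  have u_eq: "u i = e $ i * y $ i - \<alpha>" for i
    using e_sq[of i] by (simp add: u_def z_def project_out_def \<open>e \<bullet> e = n\<close> \<alpha>_def algebra_simps)
  have sum_u: "(\<Sum>i\<in>UNIV. u i) = 0"
    using inner_project_out[of e y] by (simp add: u_def z_def inner_vec_def mult.commute)
  have sum_u_sq: "(\<Sum>i\<in>UNIV. (u i)\<^sup>2) = (norm z)\<^sup>2"
    unfolding norm_vec_sq u_def power_mult_distrib by (simp add: power2_eq_square e_sq)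
  have wrong: "e $ i * y $ i \<le> 0 \<longleftrightarrow> i \<in> S" for i
  proof -
    have "e $ i = 1 \<or> e $ i = -1" using unit[of i] by (cases "e $ i \<ge> 0") auto
    then show ?thesis by (auto simp: S_def wrong_signs_def sgn_if mult_le_0_iff)
  qed
  have "\<exists>t\<in>{s, n - s}. t * n * \<alpha>\<^sup>2 \<le> (n - t) * (norm z)\<^sup>2"
  proof (cases "\<alpha> \<ge> 0")
    case True
    then have "s * n * \<alpha>\<^sup>2 \<le> (n - s) * (norm z)\<^sup>2"
      using card_mult_sq_le_sum_sq_if_sum_eq_0[of UNIV S \<alpha> u] sum_u sum_u_sq wrong u_eq
      by (simp add: s_def n_def)
    then show ?thesis by blast
  next
    case False
    have "real (card (UNIV - S)) = n - s"
      using \<open>card S \<le> CARD('n)\<close> by (simp add: card_Diff_subset s_def n_def of_nat_diff)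
    moreover have "- u i \<le> - (- \<alpha>)" if "i \<in> UNIV - S" for i
      using wrong[of i] that u_eq[of i] by simp
    ultimately have "(n - s) * n * \<alpha>\<^sup>2 \<le> (n - (n - s)) * (norm z)\<^sup>2"
      using card_mult_sq_le_sum_sq_if_sum_eq_0[of UNIV "UNIV - S" "- \<alpha>" "\<lambda>i. - u i"] False
        sum_u sum_u_sq by (simp add: sum_negf n_def)
    then show ?thesis by blast
  qed
  then obtain t where t: "t \<in> {s, n - s}" "t * n * \<alpha>\<^sup>2 \<le> (n - t) * (norm z)\<^sup>2" by blast
  have "real (min (card S) (CARD('n) - card S)) * (norm y)\<^sup>2 \<le> t * (norm y)\<^sup>2"
    using t(1) \<open>real (CARD('n) - card S) = n - s\<close> by (intro mult_right_mono) (auto simp: s_def)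
  also have "\<dots> \<le> n * (norm z)\<^sup>2"
    using t(2) by (simp add: norm_y algebra_simps)
  finally show ?thesis by (simp add: S_def n_def z_def)
qed

lemma expectation_min_card_wrong_signs_iterate_le:
  fixes C :: "real^'n^'n" and e :: "real^'n"
  assumes unit: "\<And>i. \<bar>e $ i\<bar> = 1"
    and "C *v e = 0" "frobenius_norm C \<noteq> 0" "s \<le> (frobenius_norm C)\<^sup>2"
    and "\<And>z. z \<bullet> e = 0 \<Longrightarrow> s * (norm z)\<^sup>2 \<le> (norm (C *v z))\<^sup>2"
  shows "measure_pmf.expectation (iterate_pmf C y0 k)
      (\<lambda>y. real (min (card (wrong_signs e y)) (CARD('n) - card (wrong_signs e y))) * (norm y)\<^sup>2)
    \<le> real CARD('n) * (1 - s / (frobenius_norm C)\<^sup>2) ^ k * (norm y0)\<^sup>2"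
proof -
  let ?q = "1 - s / (frobenius_norm C)\<^sup>2"
  have "measure_pmf.expectation (iterate_pmf C y0 k)
      (\<lambda>y. real (min (card (wrong_signs e y)) (CARD('n) - card (wrong_signs e y))) * (norm y)\<^sup>2)
    \<le> measure_pmf.expectation (iterate_pmf C y0 k) (\<lambda>y. real CARD('n) * (norm (project_out e y))\<^sup>2)"
    using min_card_wrong_signs_le[OF unit]
    by (intro integral_mono integrable_measure_pmf_finite finite_set_iterate_pmf) auto
  also have "\<dots> \<le> real CARD('n) * (?q ^ k * (norm (project_out e y0))\<^sup>2)"
    using expectation_norm_project_out_iterate_le[OF assms(2-)] by (simp add: mult_left_mono)
  also have "\<dots> \<le> real CARD('n) * (?q ^ k * (norm y0)\<^sup>2)"
    using norm_project_out_sq[of y0 e] assms(3,4)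
    by (intro mult_left_mono) (simp_all add: divide_nonneg_nonneg)
  finally show ?thesis by (simp add: mult.assoc)
qed

section \<open>The uniform measure on the sphere\<close>

definition reflect_coord :: "'n \<Rightarrow> real^'n \<Rightarrow> real^'n" where
  "reflect_coord k x = x - (2 * (x \<bullet> axis k 1)) *\<^sub>R axis k 1"

lemma reflect_coord_nth: "reflect_coord k x $ j = (if j = k then - x $ j else x $ j)"
  unfolding reflect_coord_def inner_axis by (simp add: axis_def)

lemma norm_reflect_coord: "norm (reflect_coord k x) = norm x"
proof -
  have "(norm (reflect_coord k x))\<^sup>2 = (norm x)\<^sup>2"
    unfolding power2_norm_eq_inner reflect_coord_def
    by (simp add: inner_diff_left inner_diff_right inner_axis_axis inner_commute algebra_simps)
  then show ?thesis by (simp add: power2_eq_iff_nonneg)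
qed

lemma reflect_coord_scaleR: "reflect_coord k (c *\<^sub>R x) = c *\<^sub>R reflect_coord k x"
  by (simp add: reflect_coord_def algebra_simps)

lemma measurable_reflect_coord [measurable]: "reflect_coord k \<in> borel_measurable borel"
  unfolding reflect_coord_def by measurable

lemma lborel_reflect_coord: "distr lborel borel (reflect_coord k) = (lborel :: (real^'n) measure)"
proof -
  define c :: "real^'n \<Rightarrow> real" where "c b = (if b = axis k 1 then -1 else 1)" for b
  have c_nonzero: "\<And>j. j \<in> Basis \<Longrightarrow> c j \<noteq> 0" by (simp add: c_def)
  have affine: "(\<lambda>x. 0 + (\<Sum>j\<in>Basis. (c j * (x \<bullet> j)) *\<^sub>R j)) = reflect_coord k"
  proof (rule ext, rule euclidean_eqI)
    fix x b :: "real^'n" assume b: "b \<in> Basis"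
    then obtain i where b_eq: "b = axis i 1" using axis_inverse by blast
    have lhs: "(0 + (\<Sum>j\<in>Basis. (c j * (x \<bullet> j)) *\<^sub>R j)) \<bullet> b = c b * (x \<bullet> b)"
      using inner_sum_left_Basis[OF b, of "\<lambda>j. c j * (x \<bullet> j)"] by simp
    have rhs: "reflect_coord k x \<bullet> b = x \<bullet> b - 2 * (x \<bullet> axis k 1) * (axis k 1 \<bullet> b)"
      by (simp add: reflect_coord_def inner_diff_left)
    show "(0 + (\<Sum>j\<in>Basis. (c j * (x \<bullet> j)) *\<^sub>R j)) \<bullet> b = reflect_coord k x \<bullet> b"
    proof (cases "i = k")
      case True
      then show ?thesis unfolding lhs rhs by (simp add: b_eq c_def inner_axis_axis)
    next
      case False
      then have "axis i (1::real) \<noteq> axis k 1" by (simp add: axis_eq_axis)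
      then show ?thesis unfolding lhs rhs using False by (simp add: b_eq c_def inner_axis_axis)
    qed
  qed
  have "\<bar>c j\<bar> = 1" for j by (simp add: c_def)
  then have "(\<Prod>j\<in>Basis. \<bar>c j\<bar>) = 1" by simp
  then show ?thesis
    using lborel_affine_euclidean[where c=c and t=0, OF c_nonzero] unfolding affine
    by (simp add: density_1)
qed

lemma distr_uniform_measure_lborel_invariant:
  fixes T :: "'a::euclidean_space \<Rightarrow> 'a"
  assumes [measurable]: "T \<in> borel_measurable borel" "B \<in> sets borel"
    and invariant: "distr lborel borel T = lborel" and maps_B: "\<And>x. T x \<in> B \<longleftrightarrow> x \<in> B"
  shows "distr (uniform_measure lborel B) borel T = uniform_measure lborel B"
proof (rule measure_eqI)
  fix X assume "X \<in> sets (distr (uniform_measure lborel B) borel T)"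
  then have [measurable]: "X \<in> sets borel" by simp
  have [measurable]: "T -` X \<in> sets borel" using measurable_sets[of T borel borel X] by simp
  have "B \<inter> T -` X = T -` (X \<inter> B)" using maps_B by auto
  then have "emeasure lborel (B \<inter> T -` X) = emeasure (distr lborel borel T) (X \<inter> B)"
    by (simp add: emeasure_distr)
  then have "emeasure lborel (B \<inter> T -` X) = emeasure lborel (B \<inter> X)"
    by (simp add: invariant Int_commute)
  then show "emeasure (distr (uniform_measure lborel B) borel T) X = emeasure (uniform_measure lborel B) X"
    by (simp add: emeasure_distr)
qed simp

lemma sets_uniform_sphere [simp]: "sets (uniform_sphere r) = sets borel"
  by (simp add: uniform_sphere_def)

lemma measurable_uniform_sphere [simp]: "measurable (uniform_sphere r) N = measurable borel N"
  by (rule measurable_cong_sets) simp_all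

lemma prob_space_uniform_sphere: "prob_space (uniform_sphere r :: (real^'n) measure)"
proof -
  have "emeasure lborel (ball (0::real^'n) 1) \<noteq> 0"
    using content_ball_pos[of 1 "0::real^'n"] by (auto simp: measure_def)
  moreover have "emeasure lborel (ball (0::real^'n) 1) \<noteq> \<infinity>"
    using emeasure_lborel_ball_finite[of "0::real^'n" 1] by simp
  ultimately show ?thesis
    unfolding uniform_sphere_def
    by (intro prob_space.prob_space_distr prob_space_uniform_measure) auto
qed

lemma AE_uniform_sphere_norm:
  assumes "r > 0"
  shows "AE z in uniform_sphere r. norm (z :: real^'n) = r"
proof -
  have "AE z in uniform_measure lborel (ball 0 1). (z :: real^'n) \<noteq> 0"
    by (intro AE_uniform_measureI) (auto intro: AE_mp[OF AE_lborel_singleton])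
  then show ?thesis
    unfolding uniform_sphere_def using assms by (subst AE_distr_iff) (auto elim!: AE_mp)
qed

lemma integrable_uniform_sphere:
  fixes f :: "real^'n \<Rightarrow> real"
  assumes "r > 0" "f \<in> borel_measurable borel" and bound: "\<And>z. norm z = r \<Longrightarrow> \<bar>f z\<bar> \<le> B"
  shows "integrable (uniform_sphere r) f"
  using AE_uniform_sphere_norm[OF \<open>r > 0\<close>] assms(2) bound
  by (intro finite_measure.integrable_const_bound[where B=B]
      prob_space.finite_measure prob_space_uniform_sphere) (auto elim!: AE_mp)

lemma uniform_sphere_reflect_coord:
  "distr (uniform_sphere r) borel (reflect_coord k) = (uniform_sphere r :: (real^'n) measure)"
proof -
  define U :: "(real^'n) measure" where "U = uniform_measure lborel (ball 0 1)"
  define \<rho> :: "real^'n \<Rightarrow> real^'n" where "\<rho> = (\<lambda>z. (r / norm z) *\<^sub>R z)"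
  have [measurable]: "\<rho> \<in> borel_measurable borel" unfolding \<rho>_def by measurable
  have "distr U borel (reflect_coord k) = U"
    unfolding U_def
    by (intro distr_uniform_measure_lborel_invariant lborel_reflect_coord) (simp_all add: norm_reflect_coord)
  have "distr (distr U borel \<rho>) borel (reflect_coord k) = distr U borel (reflect_coord k \<circ> \<rho>)"
    by (simp add: distr_distr U_def)
  also have "reflect_coord k \<circ> \<rho> = \<rho> \<circ> reflect_coord k"
    by (simp add: fun_eq_iff \<rho>_def norm_reflect_coord reflect_coord_scaleR)
  also have "distr U borel (\<rho> \<circ> reflect_coord k) = distr (distr U borel (reflect_coord k)) borel \<rho>"
    by (simp add: distr_distr U_def)
  finally show ?thesis
    using \<open>distr U borel (reflect_coord k) = U\<close> by (simp add: uniform_sphere_def U_def \<rho>_def)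
qed

text \<open>Reflecting the i-th coordinate preserves the uniform measure and changes the sign of
  the integrand.\<close>
lemma integral_uniform_sphere_mult_components:
  assumes "i \<noteq> j"
  shows "(\<integral>z. z $ i * z $ j \<partial>(uniform_sphere r :: (real^'n) measure)) = 0"
proof -
  let ?h = "\<lambda>z :: real^'n. z $ i * z $ j"
  have "integral\<^sup>L (uniform_sphere r) ?h = integral\<^sup>L (distr (uniform_sphere r) borel (reflect_coord i)) ?h"
    by (simp add: uniform_sphere_reflect_coord)
  also have "\<dots> = integral\<^sup>L (uniform_sphere r) (\<lambda>z. - ?h z)"
    using assms by (subst integral_distr) (simp_all add: reflect_coord_nth)
  finally show ?thesis by simp
qed

lemma integral_uniform_sphere_inner_sq:
  fixes e :: "real^'n"
  assumes "r > 0" and unit: "\<And>i. \<bar>e $ i\<bar> = 1"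
  shows "(\<integral>z. (z \<bullet> e)\<^sup>2 \<partial>uniform_sphere r) = r\<^sup>2"
proof -
  have e_sq: "e $ i * e $ i = 1" for i using abs_mult_self_eq[of "e $ i"] unit[of i] by simp
  have integrable: "integrable (uniform_sphere r) (\<lambda>z :: real^'n. c * (z $ i * z $ j))" for c i j
  proof (intro integrable_mult_right integrable_uniform_sphere[where B="r * r"] \<open>r > 0\<close>)
    fix z :: "real^'n" assume "norm z = r"
    then show "\<bar>z $ i * z $ j\<bar> \<le> r * r"
      unfolding abs_mult by (intro mult_mono) (auto intro: component_le_norm_cart)
  qed measurable
  have diagonal: "(\<Sum>j\<in>UNIV. (e $ i * e $ j) * (\<integral>z. z $ i * z $ j \<partial>uniform_sphere r))
      = (\<integral>z. z $ i * z $ i \<partial>uniform_sphere r)" for i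
  proof -
    have "(\<Sum>j\<in>UNIV. (e $ i * e $ j) * (\<integral>z. z $ i * z $ j \<partial>uniform_sphere r))
        = (\<Sum>j\<in>UNIV. if j = i then \<integral>z. z $ i * z $ i \<partial>uniform_sphere r else 0)"
      by (intro sum.cong) (simp_all add: e_sq integral_uniform_sphere_mult_components)
    then show ?thesis by simp
  qed
  have "(\<integral>z. (z \<bullet> e)\<^sup>2 \<partial>uniform_sphere r)
      = (\<integral>z. (\<Sum>i\<in>UNIV. \<Sum>j\<in>UNIV. (e $ i * e $ j) * (z $ i * z $ j)) \<partial>uniform_sphere r)"
    by (simp add: inner_vec_def power2_eq_square sum_product algebra_simps)
  also have "\<dots> = (\<Sum>i\<in>UNIV. \<Sum>j\<in>UNIV. (e $ i * e $ j) * (\<integral>z. z $ i * z $ j \<partial>uniform_sphere r))"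
    using integrable by (simp add: Bochner_Integration.integral_sum Bochner_Integration.integrable_sum)
  also have "\<dots> = (\<Sum>i\<in>UNIV. \<integral>z. z $ i * z $ i \<partial>(uniform_sphere r :: (real^'n) measure))"
    by (simp only: diagonal)
  also have "\<dots> = (\<integral>z. (norm z)\<^sup>2 \<partial>(uniform_sphere r :: (real^'n) measure))"
    unfolding norm_vec_sq using integrable[of 1]
    by (simp add: Bochner_Integration.integral_sum power2_eq_square)
  also have "\<dots> = (\<integral>z. r\<^sup>2 \<partial>(uniform_sphere r :: (real^'n) measure))"
    using AE_uniform_sphere_norm[OF \<open>r > 0\<close>] by (intro integral_cong_AE) (auto elim!: AE_mp)
  also have "\<dots> = r\<^sup>2"
    by (simp add: prob_space.prob_space[OF prob_space_uniform_sphere])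
  finally show ?thesis .
qed

lemma expectation_norm_iterate_uniform_sphere_ge:
  fixes C :: "real^'n^'n" and e :: "real^'n"
  assumes unit: "\<And>i. \<bar>e $ i\<bar> = 1" and "C *v e = 0" "r > 0"
  shows "r\<^sup>2 / real CARD('n)
    \<le> (\<integral>z. measure_pmf.expectation (iterate_pmf C z k) (\<lambda>y. (norm y)\<^sup>2) \<partial>uniform_sphere r)"
proof -
  define f where "f z = measure_pmf.expectation (iterate_pmf C z k) (\<lambda>y. (norm y)\<^sup>2)" for z
  have "continuous_on UNIV f"
    unfolding f_def by (intro continuous_on_expectation_iterate_pmf continuous_intros)
  then have f_measurable [measurable]: "f \<in> borel_measurable borel"
    by (rule borel_measurable_continuous_onI)
  have "e \<bullet> e = real CARD('n)" by (rule inner_self_eq_card_if_abs_components_eq_1[OF unit])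
  have lower: "(z \<bullet> e)\<^sup>2 / real CARD('n) \<le> f z" for z
  proof -
    have "(z \<bullet> e)\<^sup>2 / (e \<bullet> e) \<le> (norm y)\<^sup>2" if "y \<in> set_pmf (iterate_pmf C z k)" for y
      using inner_iterate_pmf[OF \<open>C *v e = 0\<close> that] norm_project_out_sq[of y e] by simp
    then have "AE y in iterate_pmf C z k. (z \<bullet> e)\<^sup>2 / (e \<bullet> e) \<le> (norm y)\<^sup>2"
      by (simp add: AE_measure_pmf_iff)
    then have "measure_pmf.expectation (iterate_pmf C z k) (\<lambda>y. (z \<bullet> e)\<^sup>2 / (e \<bullet> e)) \<le> f z"
      unfolding f_def
      by (intro integral_mono_AE integrable_measure_pmf_finite finite_set_iterate_pmf)
    then show ?thesis using \<open>e \<bullet> e = real CARD('n)\<close> by simp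
  qed
  have upper: "f z \<le> (norm z)\<^sup>2" for z
  proof -
    have "AE y in iterate_pmf C z k. (norm y)\<^sup>2 \<le> (norm z)\<^sup>2"
      using norm_iterate_pmf_le by (auto simp: AE_measure_pmf_iff intro: power_mono)
    then have "f z \<le> measure_pmf.expectation (iterate_pmf C z k) (\<lambda>y. (norm z)\<^sup>2)"
      unfolding f_def
      by (intro integral_mono_AE integrable_measure_pmf_finite finite_set_iterate_pmf)
    then show ?thesis by simp
  qed
  have "f z \<ge> 0" for z unfolding f_def by (rule integral_nonneg_AE) simp
  then have "integrable (uniform_sphere r) f"
    using upper \<open>r > 0\<close> by (intro integrable_uniform_sphere[where B="r\<^sup>2"]) auto
  moreover have "integrable (uniform_sphere r) (\<lambda>z. (z \<bullet> e)\<^sup>2 / real CARD('n))"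
    using lower upper \<open>r > 0\<close> by (intro integrable_uniform_sphere[where B="r\<^sup>2"]) (auto intro: order_trans)
  ultimately have "(\<integral>z. (z \<bullet> e)\<^sup>2 / real CARD('n) \<partial>uniform_sphere r) \<le> integral\<^sup>L (uniform_sphere r) f"
    using lower by (intro integral_mono)
  then show ?thesis
    using integral_uniform_sphere_inner_sq[OF \<open>r > 0\<close> unit] by (simp add: f_def[abs_def])
qed

section \<open>The kernel of C\<close>

lemma diag_mat_mult: "diag_mat a ** diag_mat b = diag_mat (\<chi> i. a $ i * b $ i)"
proof -
  have "(\<Sum>k\<in>UNIV. (if i = k then a $ i else 0) * (if k = j then b $ k else 0))
      = (if i = j then a $ i * b $ i else 0)" for i j
    by (simp add: if_distrib[of "\<lambda>t. t * _"] sum.delta cong: if_cong)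
  then show ?thesis by (simp add: vec_eq_iff matrix_matrix_mult_def diag_mat_def)
qed

lemma diag_mat_mult_vector: "diag_mat a *v v = (\<chi> i. a $ i * v $ i)"
proof -
  have "(\<Sum>j\<in>UNIV. (if i = j then a $ i else 0) * v $ j) = a $ i * v $ i" for i
    by (simp add: if_distrib[of "\<lambda>t. t * _"] sum.delta cong: if_cong)
  then show ?thesis by (simp add: vec_eq_iff matrix_vector_mult_def diag_mat_def)
qed

lemma diag_mat_1: "diag_mat (\<chi> i. 1) = mat 1"
  by (simp add: vec_eq_iff diag_mat_def mat_def)

lemma matrix_inv_diag_mat_mult:
  fixes d :: "real^'n"
  assumes "\<And>i. d $ i \<noteq> 0"
  shows "matrix_inv (diag_mat d) ** diag_mat d = mat 1"
proof -
  have "diag_mat d ** diag_mat (\<chi> i. 1 / d $ i) = mat 1 \<and> diag_mat (\<chi> i. 1 / d $ i) ** diag_mat d = mat 1"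
    using assms by (simp add: diag_mat_mult flip: diag_mat_1)
  then have "\<exists>D'. diag_mat d ** D' = mat 1 \<and> D' ** diag_mat d = mat 1" by blast
  from someI_ex[OF this] show ?thesis unfolding matrix_inv_def by blast
qed

text \<open>D (sgn x_i)_i = x, so C (sgn x_i)_i = D^-1 A x - l (sgn x_i)_i = 0.\<close>
lemma Cmat_mult_sgn_eigenvector:
  assumes eigen: "A *v x = l *\<^sub>R x" and nonzero: "\<And>i. x $ i \<noteq> 0"
  shows "Cmat A l x *v (\<chi> i. sgn (x $ i)) = 0"
proof -
  define D where "D = diag_mat (\<chi> i. \<bar>x $ i\<bar>)"
  define e where "e = (\<chi> i. sgn (x $ i))"
  have "D *v e = x" by (simp add: D_def e_def diag_mat_mult_vector vec_eq_iff abs_mult_sgn)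
  have "Cmat A l x *v e = matrix_inv D *v (A *v (D *v e)) - l *\<^sub>R e"
    unfolding Cmat_def D_def[symmetric]
    by (simp add: matrix_vector_mult_diff_rdistrib matrix_vector_mul_assoc matrix_mul_assoc
        flip: scaleR_matrix_vector_assoc)
  also have "\<dots> = l *\<^sub>R ((matrix_inv D ** D) *v e) - l *\<^sub>R e"
    by (simp add: \<open>D *v e = x\<close> eigen matrix_vector_mult_scaleR flip: matrix_vector_mul_assoc)
  also have "\<dots> = 0"
    using nonzero by (simp add: D_def matrix_inv_diag_mat_mult)
  finally show ?thesis by (simp add: e_def)
qed

theorem mainTheorem1:
  fixes A :: "real^'n^'n" and l :: real and x y0 :: "real^'n"
  assumes n2: "CARD('n) \<ge> 2"
    and simple: "simple_eigenvalue A l"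
    and eigvec: "A *v x = l *\<^sub>R x"
    and nonzero: "\<forall>i. x $ i \<noteq> 0"
    and sigma: "singular_value (Cmat A l x) (CARD('n) - 1) > 0"
    and y0: "y0 \<noteq> 0"
  shows "(\<forall>k::nat.
           measure_pmf.expectation (iterate_pmf (Cmat A l x) y0 k)
             (\<lambda>y. real (min (card (wrong_signs (\<chi> i. sgn (x $ i)) y))
                             (CARD('n) - card (wrong_signs (\<chi> i. sgn (x $ i)) y))) * (norm y)\<^sup>2)
           \<le> real CARD('n)
             * (1 - (singular_value (Cmat A l x) (CARD('n) - 1))\<^sup>2 / (frobenius_norm (Cmat A l x))\<^sup>2) ^ k
             * (norm y0)\<^sup>2)
         \<and> (\<forall>r>0. \<forall>k::nat.
           (\<integral>z. measure_pmf.expectation (iterate_pmf (Cmat A l x) z k) (\<lambda>y. (norm y)\<^sup>2)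
              \<partial>(uniform_sphere r :: (real^'n) measure))
           \<ge> r\<^sup>2 / real CARD('n))"
proof -
  define C where "C = Cmat A l x"
  define e :: "real^'n" where "e = (\<chi> i. sgn (x $ i))"
  define \<sigma> where "\<sigma> = singular_value C (CARD('n) - 1)"
  have "C *v e = 0"
    unfolding C_def e_def using Cmat_mult_sgn_eigenvector eigvec nonzero by blast
  have unit: "\<bar>e $ i\<bar> = 1" for i using nonzero by (simp add: e_def)
  then have "e \<noteq> 0" by (metis abs_zero zero_index zero_neq_one)
  have "\<sigma> > 0" using sigma by (simp add: \<sigma>_def C_def)
  have lower: "\<sigma>\<^sup>2 * (norm z)\<^sup>2 \<le> (norm (C *v z))\<^sup>2" if "z \<bullet> e = 0" for z
    using singular_value_sq_lower_bound[OF n2 \<open>C *v e = 0\<close> \<open>e \<noteq> 0\<close> _ that] \<open>\<sigma> > 0\<close>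
    by (simp add: \<sigma>_def)
  have "\<sigma>\<^sup>2 \<le> (frobenius_norm C)\<^sup>2"
    using n2 lower by (rule le_frobenius_norm_sq_if_lower_bound)
  moreover have "\<sigma>\<^sup>2 > 0" using \<open>\<sigma> > 0\<close> by simp
  ultimately have "frobenius_norm C \<noteq> 0" by auto
  show ?thesis
    using expectation_min_card_wrong_signs_iterate_le[OF unit \<open>C *v e = 0\<close> \<open>frobenius_norm C \<noteq> 0\<close>
        \<open>\<sigma>\<^sup>2 \<le> (frobenius_norm C)\<^sup>2\<close> lower]
      expectation_norm_iterate_uniform_sphere_ge[OF unit \<open>C *v e = 0\<close>]
    unfolding C_def e_def \<sigma>_def by blast
qed

end
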